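(* Let $\psi$ be a branching mechanism and $g$ the associated gauge function (see context). Let $c\in(0,\infty)$. Then there exists $r(c)\in(0,r_0)$, depending only on $c$, such that for all $r\in(0,r(c))$, $$g(r)\,\psi'^{-1}(c/r^2)\le 4r^2,$$ where $\psi'^{-1}$ is the inverse function of the derivative $\psi'$.
   Context: A branching mechanism is $\psi(\lambda)=\alpha\lambda+\beta\lambda^2+\int_{(0,\infty)}(e^{-\lambda r}-1+\lambda r)\pi(\mathrm{d}r)$, $\lambda\ge0$, with $\alpha,\beta\ge0$ and $\pi$ a Borel measure on $(0,\infty)$ with $\int(r\wedge r^2)\pi(\mathrm{d}r)<\infty$. Let $\varphi=\psi'\circ\psi^{-1}$, whose inverse $\varphi^{-1}$ is defined on $[\alpha,\infty)$. The gauge function is $g(r)=\log\log\frac1r\,/\,\varphi^{-1}\big((\frac1r\log\log\frac1r)^2\big)$ for $r\in(0,r_0)$, with $r_0=\min(\alpha^{-1/2},e^{-e})$ (and $\alpha^{-1/2}=\infty$ if $\alpha=0$). *)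

theory Defs
  imports "HOL-Analysis.Analysis"
begin

definition branching_mech :: "real \<Rightarrow> real \<Rightarrow> real measure \<Rightarrow> bool" where
  "branching_mech \<alpha> \<beta> \<pi> \<longleftrightarrow>
     \<alpha> \<ge> 0 \<and> \<beta> \<ge> 0 \<and> sets \<pi> = sets borel \<and> emeasure \<pi> {..0} = 0 \<and>
     integrable \<pi> (\<lambda>r. min r (r^2))"

definition psi :: "real \<Rightarrow> real \<Rightarrow> real measure \<Rightarrow> real \<Rightarrow> real" where
  "psi \<alpha> \<beta> \<pi> l = \<alpha> * l + \<beta> * l^2 + (\<integral>r. (exp (- l * r) - 1 + l * r) \<partial>\<pi>)"

definition psi_deriv :: "real \<Rightarrow> real \<Rightarrow> real measure \<Rightarrow> real \<Rightarrow> real" where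
  "psi_deriv \<alpha> \<beta> \<pi> l = (THE d. (psi \<alpha> \<beta> \<pi> has_real_derivative d) (at l within {0..}))"

definition psi_deriv_inv :: "real \<Rightarrow> real \<Rightarrow> real measure \<Rightarrow> real \<Rightarrow> real" where
  "psi_deriv_inv \<alpha> \<beta> \<pi> = inv_into {0..} (psi_deriv \<alpha> \<beta> \<pi>)"

definition phi :: "real \<Rightarrow> real \<Rightarrow> real measure \<Rightarrow> real \<Rightarrow> real" where
  "phi \<alpha> \<beta> \<pi> = psi_deriv \<alpha> \<beta> \<pi> \<circ> inv_into {0..} (psi \<alpha> \<beta> \<pi>)"

definition phi_inv :: "real \<Rightarrow> real \<Rightarrow> real measure \<Rightarrow> real \<Rightarrow> real" where
  "phi_inv \<alpha> \<beta> \<pi> = inv_into {0..} (phi \<alpha> \<beta> \<pi>)"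

definition gauge :: "real \<Rightarrow> real \<Rightarrow> real measure \<Rightarrow> real \<Rightarrow> real" where
  "gauge \<alpha> \<beta> \<pi> r = ln (ln (1 / r)) / phi_inv \<alpha> \<beta> \<pi> (((1 / r) * ln (ln (1 / r)))^2)"

text \<open>r_0 = min(alpha^{-1/2}, e^{-e}), with alpha^{-1/2} = \<infinity> if alpha = 0.\<close>
definition r0 :: "real \<Rightarrow> real" where
  "r0 \<alpha> = (if \<alpha> = 0 then exp (- exp 1) else min (1 / sqrt \<alpha>) (exp (- exp 1)))"

end

theory Submission
  imports Defs
begin

text \<open>Put \<open>L = ln ln (1/r)\<close>, \<open>\<nu> = \<psi>'\<^sup>-\<^sup>1(c/r\<^sup>2)\<close> and \<open>w = \<psi>'\<^sup>-\<^sup>1((L/r)\<^sup>2)\<close>, so that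
  \<open>\<phi>\<^sup>-\<^sup>1((L/r)\<^sup>2) = \<psi>(w)\<close> and \<open>g(r) = L / \<psi>(w)\<close>. Since \<open>\<psi>'\<close> is subhomogeneous,
  \<open>\<psi>'(t\<mu>) \<le> t \<psi>'(\<mu>)\<close> for \<open>t \<ge> 1\<close>, and strictly increasing, \<open>w \<ge> (L\<^sup>2/c) \<nu>\<close>; convexity
  of \<open>\<psi>\<close> then gives \<open>\<psi>(w) \<ge> \<psi>'(\<nu>)(w - \<nu>) \<ge> (L\<^sup>2 - c) \<nu> / r\<^sup>2\<close>. For small \<open>r\<close> we have
  \<open>L > 1 + c\<close>, hence \<open>L \<le> L\<^sup>2 - c\<close> and \<open>g(r) \<nu> \<le> r\<^sup>2\<close>.
  The analytic work is to justify differentiating \<open>\<psi>\<close> under the integral sign, which is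
  done by dominating both the Taylor remainder and the increment of the integrand of \<open>\<psi>'\<close>
  by the integral \<open>levy_modulus\<close>, which tends to \<open>0\<close> by dominated convergence.\<close>

lemma exp_minus_remainder_bounds:
  fixes d :: real assumes "d \<ge> 0"
  shows "0 \<le> exp (-d) - 1 + d" "exp (-d) - 1 + d \<le> d * min 1 d"
proof -
  show "0 \<le> exp (-d) - 1 + d" using exp_ge_add_one_self[of "-d"] by simp
  have "(1 + d) * (1 - d + d^2) \<le> exp d * (1 - d + d^2)"
  proof (rule mult_right_mono)
    show "1 + d \<le> exp d" by (rule exp_ge_add_one_self)
    have "1 - d + d^2 = (d - 1/2)^2 + 3/4" by (simp add: power2_eq_square field_simps)
    then show "0 \<le> 1 - d + d^2" by simp
  qed
  moreover have "(1 + d) * (1 - d + d^2) = 1 + d^3"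
    by (simp add: algebra_simps power2_eq_square power3_eq_cube)
  ultimately have "1 \<le> exp d * (1 - d + d^2)" using assms zero_le_power[of d 3] by linarith
  then have "exp (-d) \<le> 1 - d + d^2" by (simp add: exp_minus field_simps)
  moreover have "exp (-d) \<le> 1" using assms by simp
  ultimately show "exp (-d) - 1 + d \<le> d * min 1 d" by (simp add: min_def power2_eq_square)
qed

lemma abs_mult_le_of_unit_interval:
  fixes x y :: real assumes "0 \<le> x" "x \<le> 1"
  shows "\<bar>x * y\<bar> \<le> \<bar>y\<bar>"
  using assms mult_left_le_one_le[of "\<bar>y\<bar>" x] by (simp add: abs_mult)

lemma exp_minus_taylor_bound:
  fixes a b :: real assumes "a \<ge> 0" "b \<ge> 0"
  shows "\<bar>exp (-b) - exp (-a) + (b - a) * exp (-a)\<bar> \<le> \<bar>b - a\<bar> * min 1 \<bar>b - a\<bar>"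
proof (cases "a \<le> b")
  case True
  define v where "v = b - a"
  have v: "v \<ge> 0" "\<bar>b - a\<bar> = v" using True by (auto simp: v_def)
  have "exp (-b) - exp (-a) + (b - a) * exp (-a) = exp (-a) * (exp (-v) - 1 + v)"
    by (simp add: v_def algebra_simps flip: exp_add)
  also have "\<bar>\<dots>\<bar> \<le> \<bar>exp (-v) - 1 + v\<bar>"
    using assms by (intro abs_mult_le_of_unit_interval) auto
  also have "\<dots> \<le> v * min 1 v" using exp_minus_remainder_bounds[OF v(1)] by simp
  finally show ?thesis using v(2) by simp
next
  case False
  define u where "u = a - b"
  have u: "u > 0" "\<bar>b - a\<bar> = u" using False by (auto simp: u_def)
  have "1 - exp (-u) * (1 + u) \<le> min u (u * u)"
  proof -
    have "0 \<le> u * exp (-u)" using u by simp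
    moreover have "1 - exp (-u) * (1 + u) = 1 - exp (-u) - u * exp (-u)" by (simp add: algebra_simps)
    moreover have "(1 - u) * (1 + u) \<le> exp (-u) * (1 + u)"
      using exp_ge_add_one_self[of "-u"] u by (intro mult_right_mono) auto
    ultimately show ?thesis using exp_ge_add_one_self[of "-u"] by (simp add: algebra_simps)
  qed
  moreover have "0 \<le> 1 - exp (-u) * (1 + u)"
    using exp_ge_add_one_self[of u] by (simp add: exp_minus field_simps)
  moreover have "exp (-b) - exp (-a) + (b - a) * exp (-a) = exp (-b) * (1 - exp (-u) * (1 + u))"
    by (simp add: u_def algebra_simps flip: exp_add)
  then have "\<bar>exp (-b) - exp (-a) + (b - a) * exp (-a)\<bar> \<le> \<bar>1 - exp (-u) * (1 + u)\<bar>"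
    using assms by (simp only:) (intro abs_mult_le_of_unit_interval, auto)
  moreover have "min u (u * u) = u * min 1 u" using u(1) by (simp add: min_mult_distrib_left)
  ultimately show ?thesis
    unfolding u(2) using abs_of_nonneg[of "1 - exp (-u) * (1 + u)"] by linarith
qed

lemma exp_minus_diff_bound:
  fixes a b :: real assumes "a \<ge> 0" "b \<ge> 0"
  shows "\<bar>exp (-a) - exp (-b)\<bar> \<le> min 1 \<bar>b - a\<bar>"
proof -
  have main: "\<bar>exp (-x) - exp (-y)\<bar> \<le> min 1 \<bar>y - x\<bar>" if "0 \<le> x" "x \<le> y" for x y :: real
  proof -
    have "exp (-x) - exp (-y) = exp (-x) * (1 - exp (-(y - x)))"
      by (simp add: algebra_simps flip: exp_add)
    also have "\<bar>\<dots>\<bar> \<le> \<bar>1 - exp (-(y - x))\<bar>"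
      using that by (intro abs_mult_le_of_unit_interval) auto
    also have "\<dots> \<le> min 1 \<bar>y - x\<bar>"
      using that exp_ge_add_one_self[of "-(y - x)"] by (auto simp del: minus_diff_eq)
    finally show ?thesis .
  qed
  show ?thesis
    using main[of a b] main[of b a] assms by (cases "a \<le> b") (auto simp: abs_minus_commute)
qed

lemma one_minus_exp_minus_mult_le:
  fixes x t :: real assumes "x \<ge> 0" "t \<ge> 1"
  shows "1 - exp (- (t * x)) \<le> t * (1 - exp (-x))"
proof -
  define f where "f y = t * (1 - exp (-y)) - (1 - exp (- (t * y)))" for y
  have "f 0 \<le> f x"
  proof (rule DERIV_nonneg_imp_increasing_open[OF assms(1)])
    fix y assume y: "0 < y" "y < x"
    have "DERIV f y :> t * exp (-y) - t * exp (- (t * y))"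
      unfolding f_def by (auto intro!: derivative_eq_intros)
    moreover have "exp (- (t * y)) \<le> exp (-y)" using y assms by simp
    then have "t * exp (-y) - t * exp (- (t * y)) \<ge> 0" using assms by simp
    ultimately show "\<exists>d. DERIV f y :> d \<and> 0 \<le> d" by blast
  qed (unfold f_def, intro continuous_intros)
  then show ?thesis by (simp add: f_def)
qed

lemma mult_min_le_min_square:
  fixes r k :: real assumes "0 < r" "0 \<le> k"
  shows "r * min 1 (k * r) \<le> (1 + k) * min r (r^2)"
proof (cases "r \<le> 1")
  case True
  then have "min r (r^2) = r^2" using assms by (simp add: min_def power2_eq_square mult_left_le_one_le)
  have "r * min 1 (k * r) \<le> r * (k * r)" using assms by (intro mult_left_mono) auto
  also have "\<dots> \<le> (1 + k) * r^2" using assms by (simp add: power2_eq_square algebra_simps)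
  finally show ?thesis using \<open>min r (r^2) = r^2\<close> by simp
next
  case False
  then have "min r (r^2) = r" by (simp add: min_def power2_eq_square)
  moreover have "r * min 1 (k * r) \<le> r" using assms by (simp add: mult_left_le)
  moreover have "0 \<le> k * r" using assms by simp
  ultimately show ?thesis by (simp add: algebra_simps)
qed

lemma ln_ln_inverse_gt:
  fixes r x :: real assumes "0 < r" "r < exp (- exp x)"
  shows "x < ln (ln (1 / r))"
proof -
  have "exp (exp x) < 1 / r" using assms by (simp add: exp_minus field_simps)
  then have "ln (exp (exp x)) < ln (1 / r)" using assms by (subst ln_less_cancel_iff) auto
  then have "exp x < ln (1 / r)" by simp
  moreover have "0 < exp x" by simp
  ultimately have "ln (exp x) < ln (ln (1 / r))" by (subst ln_less_cancel_iff) linarith+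
  then show ?thesis by simp
qed

definition dpsi :: "real \<Rightarrow> real \<Rightarrow> real measure \<Rightarrow> real \<Rightarrow> real" where
  "dpsi \<alpha> \<beta> \<pi> l = \<alpha> + 2 * \<beta> * l + (\<integral>r. r * (1 - exp (- l * r)) \<partial>\<pi>)"

definition levy_modulus :: "real measure \<Rightarrow> real \<Rightarrow> real" where
  "levy_modulus \<pi> h = (\<integral>r. r * min 1 (\<bar>h\<bar> * r) \<partial>\<pi>)"

locale branching_mechanism =
  fixes \<alpha> \<beta> :: real and \<pi> :: "real measure"
  assumes bm: "branching_mech \<alpha> \<beta> \<pi>"
begin

lemma alpha_nonneg: "\<alpha> \<ge> 0" and beta_nonneg: "\<beta> \<ge> 0"
  using bm by (auto simp: branching_mech_def)

lemma sets_levy: "sets \<pi> = sets borel"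
  using bm by (simp add: branching_mech_def)

lemma borel_measurable_levy: "f \<in> borel_measurable borel \<Longrightarrow> f \<in> borel_measurable \<pi>"
  by (subst measurable_cong_sets[OF sets_levy refl]) simp

lemma AE_levy_pos: "AE r in \<pi>. r > 0"
proof (rule AE_I')
  show "{..0::real} \<in> null_sets \<pi>" using bm sets_levy by (simp add: branching_mech_def null_sets_def)
  show "{r \<in> space \<pi>. \<not> 0 < r} \<subseteq> {..0}" by auto
qed

lemma integrable_levy_dominated:
  assumes "f \<in> borel_measurable borel" "C \<ge> 0" "k \<ge> 0"
    and "\<And>r. r > 0 \<Longrightarrow> \<bar>f r\<bar> \<le> C * (r * min 1 (k * r))"
  shows "integrable \<pi> f"
proof (rule Bochner_Integration.integrable_bound[where f = "\<lambda>r. C * (1 + k) * min r (r^2)"])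
  show "integrable \<pi> (\<lambda>r. C * (1 + k) * min r (r^2))" using bm by (simp add: branching_mech_def)
  show "f \<in> borel_measurable \<pi>" by (rule borel_measurable_levy[OF assms(1)])
  show "AE r in \<pi>. norm (f r) \<le> norm (C * (1 + k) * min r (r^2))"
    using AE_levy_pos
  proof eventually_elim
    case (elim r)
    have "\<bar>f r\<bar> \<le> C * ((1 + k) * min r (r^2))"
      using assms(4)[OF elim] mult_left_mono[OF mult_min_le_min_square[OF elim assms(3)] assms(2)]
      by linarith
    then show ?case using elim assms(2,3) by (simp add: mult.assoc)
  qed
qed

lemma integrable_levy_modulus: "integrable \<pi> (\<lambda>r. r * min 1 (\<bar>h\<bar> * r))"
  by (rule integrable_levy_dominated[where C = 1 and k = "\<bar>h\<bar>"]) auto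

lemma integrable_psi_integrand:
  assumes "l \<ge> 0" shows "integrable \<pi> (\<lambda>r. exp (- l * r) - 1 + l * r)"
proof (rule integrable_levy_dominated[where C = l and k = l])
  fix r :: real assume "r > 0"
  then show "\<bar>exp (- l * r) - 1 + l * r\<bar> \<le> l * (r * min 1 (l * r))"
    using exp_minus_remainder_bounds[of "l * r"] assms by (simp add: mult.assoc)
qed (use assms in auto)

lemma integrable_dpsi_integrand:
  assumes "l \<ge> 0" shows "integrable \<pi> (\<lambda>r. r * (1 - exp (- l * r)))"
proof (rule integrable_levy_dominated[where C = 1 and k = l])
  fix r :: real assume "r > 0"
  then show "\<bar>r * (1 - exp (- l * r))\<bar> \<le> 1 * (r * min 1 (l * r))"
    using exp_minus_diff_bound[of 0 "l * r"] assms by (simp add: abs_mult mult_left_mono)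
qed (use assms in auto)

lemma levy_modulus_mono:
  assumes "\<bar>h\<bar> \<le> \<bar>k\<bar>" shows "levy_modulus \<pi> h \<le> levy_modulus \<pi> k"
  unfolding levy_modulus_def
proof (rule integral_mono_AE')
  show "AE r in \<pi>. r * min 1 (\<bar>h\<bar> * r) \<le> r * min 1 (\<bar>k\<bar> * r)"
    using AE_levy_pos
  proof eventually_elim
    case (elim r)
    have "\<bar>h\<bar> * r \<le> \<bar>k\<bar> * r" using assms elim by (intro mult_right_mono) auto
    then have "min 1 (\<bar>h\<bar> * r) \<le> min 1 (\<bar>k\<bar> * r)" by (rule min.mono[OF order_refl])
    then show ?case using elim by (simp add: mult_left_mono)
  qed
  show "AE r in \<pi>. 0 \<le> r * min 1 (\<bar>k\<bar> * r)"
    using AE_levy_pos by eventually_elim simp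
qed (rule integrable_levy_modulus)

lemma levy_modulus_tendsto_0: "((\<lambda>t. levy_modulus \<pi> (1 / t)) \<longlongrightarrow> 0) at_top"
proof -
  have "((\<lambda>t. \<integral>r. r * min 1 (\<bar>1 / t\<bar> * r) \<partial>\<pi>) \<longlongrightarrow> (\<integral>r. 0 \<partial>\<pi>)) at_top"
  proof (rule integral_dominated_convergence_at_top[where w = "\<lambda>r. min r (r^2)"])
    show "integrable \<pi> (\<lambda>r. min r (r^2))" using bm by (simp add: branching_mech_def)
    show "(\<lambda>r. r * min 1 (\<bar>1 / t\<bar> * r)) \<in> borel_measurable \<pi>" for t
      by (intro borel_measurable_levy) measurable
    have "((\<lambda>t::real. \<bar>1 / t\<bar>) \<longlongrightarrow> 0) at_top"
      unfolding tendsto_rabs_zero_iff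
      by (rule tendsto_divide_0[OF tendsto_const filterlim_at_top_imp_at_infinity[OF filterlim_ident]])
    then have "((\<lambda>t. r * min 1 (\<bar>1 / t\<bar> * r)) \<longlongrightarrow> r * min 1 (0 * r)) at_top" for r :: real
      by (intro tendsto_mult[OF tendsto_const] tendsto_min[OF tendsto_const] tendsto_mult[OF _ tendsto_const])
    then show "AE r in \<pi>. ((\<lambda>t. r * min 1 (\<bar>1 / t\<bar> * r)) \<longlongrightarrow> 0) at_top"
      by simp
    show "\<forall>\<^sub>F t in at_top. AE r in \<pi>. norm (r * min 1 (\<bar>1 / t\<bar> * r)) \<le> min r (r^2)"
    proof (rule eventually_mono[OF eventually_ge_at_top[of 1]])
      fix t :: real assume t: "1 \<le> t"
      show "AE r in \<pi>. norm (r * min 1 (\<bar>1 / t\<bar> * r)) \<le> min r (r^2)"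
        using AE_levy_pos
      proof eventually_elim
        case (elim r)
        have "\<bar>1 / t\<bar> * r \<le> r" using t elim by (simp add: divide_le_eq)
        then have "r * min 1 (\<bar>1 / t\<bar> * r) \<le> r * min 1 r" using elim by (intro mult_left_mono) auto
        also have "\<dots> = min r (r^2)" using elim by (simp add: min_def power2_eq_square)
        finally show ?case using elim t by simp
      qed
    qed
  qed simp
  then show ?thesis by (simp add: levy_modulus_def)
qed

lemma levy_modulus_small:
  assumes "e > 0" obtains d where "d > 0" "\<And>h. \<bar>h\<bar> < d \<Longrightarrow> levy_modulus \<pi> h < e"
proof -
  obtain T where T: "\<And>t. t \<ge> T \<Longrightarrow> levy_modulus \<pi> (1 / t) < e"
    using order_tendstoD(2)[OF levy_modulus_tendsto_0 assms] by (auto simp: eventually_at_top_linorder)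
  define t where "t = max T 1"
  have "levy_modulus \<pi> h < e" if "\<bar>h\<bar> < 1 / t" for h
    using levy_modulus_mono[of h "1 / t"] T[of t] that by (simp add: t_def)
  then show ?thesis by (intro that[of "1 / t"]) (auto simp: t_def)
qed

lemma psi_integral_taylor_bound:
  assumes l: "l \<ge> 0" and y: "y \<ge> 0"
  shows "\<bar>(\<integral>r. exp (- y * r) - 1 + y * r \<partial>\<pi>) - (\<integral>r. exp (- l * r) - 1 + l * r \<partial>\<pi>)
          - (y - l) * (\<integral>r. r * (1 - exp (- l * r)) \<partial>\<pi>)\<bar> \<le> \<bar>y - l\<bar> * levy_modulus \<pi> (y - l)"
proof -
  define f where "f r = (exp (- y * r) - 1 + y * r) - (exp (- l * r) - 1 + l * r)
    - (y - l) * (r * (1 - exp (- l * r)))" for r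
  have iF: "integrable \<pi> (\<lambda>r. exp (- y * r) - 1 + y * r)"
    "integrable \<pi> (\<lambda>r. exp (- l * r) - 1 + l * r)"
    using integrable_psi_integrand l y by auto
  have eq: "(\<integral>r. exp (- y * r) - 1 + y * r \<partial>\<pi>) - (\<integral>r. exp (- l * r) - 1 + l * r \<partial>\<pi>)
          - (y - l) * (\<integral>r. r * (1 - exp (- l * r)) \<partial>\<pi>) = (\<integral>r. f r \<partial>\<pi>)"
    unfolding f_def
    by (subst Bochner_Integration.integral_diff[OF Bochner_Integration.integrable_diff[OF iF]
          Bochner_Integration.integrable_mult_right[OF integrable_dpsi_integrand[OF l]]],
        subst Bochner_Integration.integral_diff[OF iF], simp)
  have "\<bar>\<integral>r. f r \<partial>\<pi>\<bar> \<le> (\<integral>r. \<bar>f r\<bar> \<partial>\<pi>)" by (rule integral_abs_bound)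
  also have "\<dots> \<le> (\<integral>r. \<bar>y - l\<bar> * (r * min 1 (\<bar>y - l\<bar> * r)) \<partial>\<pi>)"
  proof (rule integral_mono_AE')
    show "integrable \<pi> (\<lambda>r. \<bar>y - l\<bar> * (r * min 1 (\<bar>y - l\<bar> * r)))"
      using integrable_levy_modulus by simp
    show "AE r in \<pi>. \<bar>f r\<bar> \<le> \<bar>y - l\<bar> * (r * min 1 (\<bar>y - l\<bar> * r))"
      using AE_levy_pos
    proof eventually_elim
      case (elim r)
      have "\<bar>exp (-(y*r)) - exp (-(l*r)) + (y*r - l*r) * exp (-(l*r))\<bar>
             \<le> \<bar>y*r - l*r\<bar> * min 1 \<bar>y*r - l*r\<bar>"
        using l y elim by (intro exp_minus_taylor_bound) auto
      moreover have "f r = exp (-(y*r)) - exp (-(l*r)) + (y*r - l*r) * exp (-(l*r))"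
        unfolding f_def by (simp add: algebra_simps)
      moreover have "y*r - l*r = (y - l) * r" by (simp add: algebra_simps)
      then have "\<bar>y*r - l*r\<bar> = \<bar>y - l\<bar> * r" using elim by (simp add: abs_mult)
      ultimately show ?case by (simp add: mult.assoc)
    qed
    show "AE r in \<pi>. 0 \<le> \<bar>y - l\<bar> * (r * min 1 (\<bar>y - l\<bar> * r))"
      using AE_levy_pos by eventually_elim simp
  qed
  also have "\<dots> = \<bar>y - l\<bar> * levy_modulus \<pi> (y - l)" by (simp add: levy_modulus_def)
  finally show ?thesis using eq by simp
qed

lemma psi_integral_has_derivative:
  assumes l: "l \<ge> 0"
  shows "((\<lambda>y. \<integral>r. exp (- y * r) - 1 + y * r \<partial>\<pi>) has_real_derivative
           (\<integral>r. r * (1 - exp (- l * r)) \<partial>\<pi>)) (at l within {0..})"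
proof -
  define I where "I y = (\<integral>r. exp (- y * r) - 1 + y * r \<partial>\<pi>)" for y
  define J where "J = (\<integral>r. r * (1 - exp (- l * r)) \<partial>\<pi>)"
  have "((\<lambda>y. (I y - I l) / (y - l)) \<longlongrightarrow> J) (at l within {0..})"
    unfolding tendsto_iff
  proof (intro allI impI)
    fix e :: real assume "e > 0"
    obtain d where d: "d > 0" "\<And>h. \<bar>h\<bar> < d \<Longrightarrow> levy_modulus \<pi> h < e"
      using levy_modulus_small[OF \<open>e > 0\<close>] by blast
    show "\<forall>\<^sub>F y in at l within {0..}. dist ((I y - I l) / (y - l)) J < e"
      unfolding eventually_at
    proof (intro exI[of _ d] conjI ballI impI)
      fix y :: real assume y: "y \<in> {0..}" and yl: "y \<noteq> l \<and> dist y l < d"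
      have "(I y - I l) / (y - l) - J = (I y - I l - (y - l) * J) / (y - l)"
        using yl by (simp add: field_simps)
      then have "\<bar>(I y - I l) / (y - l) - J\<bar> = \<bar>I y - I l - (y - l) * J\<bar> / \<bar>y - l\<bar>" by simp
      also have "\<dots> \<le> levy_modulus \<pi> (y - l)"
        using psi_integral_taylor_bound[OF l, of y] y yl
        by (simp add: I_def J_def divide_le_eq mult.commute)
      also have "\<dots> < e" using d yl by (simp add: dist_real_def)
      finally show "dist ((I y - I l) / (y - l)) J < e" by (simp add: dist_real_def)
    qed (rule d(1))
  qed
  then show ?thesis unfolding has_field_derivative_iff I_def J_def .
qed

lemma dpsi_integral_diff_bound:
  assumes l: "l \<ge> 0" and y: "y \<ge> 0"
  shows "\<bar>(\<integral>r. r * (1 - exp (- y * r)) \<partial>\<pi>) - (\<integral>r. r * (1 - exp (- l * r)) \<partial>\<pi>)\<bar>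
          \<le> levy_modulus \<pi> (y - l)"
proof -
  have "(\<integral>r. r * (1 - exp (- y * r)) \<partial>\<pi>) - (\<integral>r. r * (1 - exp (- l * r)) \<partial>\<pi>)
      = (\<integral>r. r * (1 - exp (- y * r)) - r * (1 - exp (- l * r)) \<partial>\<pi>)"
    using integrable_dpsi_integrand[OF l] integrable_dpsi_integrand[OF y]
    by (rule Bochner_Integration.integral_diff[symmetric, rotated])
  also have "\<bar>\<dots>\<bar> \<le> (\<integral>r. \<bar>r * (1 - exp (- y * r)) - r * (1 - exp (- l * r))\<bar> \<partial>\<pi>)"
    by (rule integral_abs_bound)
  also have "\<dots> \<le> levy_modulus \<pi> (y - l)" unfolding levy_modulus_def
  proof (rule integral_mono_AE')
    show "AE r in \<pi>. \<bar>r * (1 - exp (- y * r)) - r * (1 - exp (- l * r))\<bar> \<le> r * min 1 (\<bar>y - l\<bar> * r)"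
      using AE_levy_pos
    proof eventually_elim
      case (elim r)
      have "\<bar>exp (-(l*r)) - exp (-(y*r))\<bar> \<le> min 1 \<bar>y*r - l*r\<bar>"
        using l y elim by (intro exp_minus_diff_bound) auto
      moreover have "y*r - l*r = (y - l) * r" by (simp add: algebra_simps)
      then have "\<bar>y*r - l*r\<bar> = \<bar>y - l\<bar> * r" using elim by (simp add: abs_mult)
      moreover have "r * (1 - exp (- y * r)) - r * (1 - exp (- l * r)) = r * (exp (-(l*r)) - exp (-(y*r)))"
        by (simp add: algebra_simps)
      ultimately show ?case using elim by (simp add: abs_mult mult_left_mono)
    qed
    show "AE r in \<pi>. 0 \<le> r * min 1 (\<bar>y - l\<bar> * r)"
      using AE_levy_pos by eventually_elim simp
  qed (rule integrable_levy_modulus)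
  finally show ?thesis .
qed

lemma psi_has_derivative:
  assumes "l \<ge> 0"
  shows "(psi \<alpha> \<beta> \<pi> has_real_derivative dpsi \<alpha> \<beta> \<pi> l) (at l within {0..})"
proof -
  have "((\<lambda>x. (\<alpha> * x + \<beta> * x^2) + (\<integral>r. exp (- x * r) - 1 + x * r \<partial>\<pi>)) has_real_derivative
      (\<alpha> + 2 * \<beta> * l) + (\<integral>r. r * (1 - exp (- l * r)) \<partial>\<pi>)) (at l within {0..})"
    by (intro DERIV_add psi_integral_has_derivative assms) (auto intro!: derivative_eq_intros)
  then show ?thesis by (simp add: psi_def[abs_def] dpsi_def)
qed

lemma psi_deriv_eq_dpsi:
  assumes l: "l \<ge> 0"
  shows "psi_deriv \<alpha> \<beta> \<pi> l = dpsi \<alpha> \<beta> \<pi> l"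
  unfolding psi_deriv_def
proof (rule the_equality)
  have "l \<in> closure {l<..}" by simp
  moreover have "closure {l<..} \<subseteq> closure ({0..} - {l})" using l by (intro closure_mono) auto
  ultimately have "l \<in> closure ({0..} - {l})" by blast
  then have "at l within {0..} \<noteq> bot" by (subst at_within_eq_bot_iff) auto
  then show "d = dpsi \<alpha> \<beta> \<pi> l"
    if "(psi \<alpha> \<beta> \<pi> has_real_derivative d) (at l within {0..})" for d
    by (rule has_field_derivative_unique[OF that psi_has_derivative[OF l]])
qed (rule psi_has_derivative[OF l])

lemma psi_0: "psi \<alpha> \<beta> \<pi> 0 = 0" and dpsi_0: "dpsi \<alpha> \<beta> \<pi> 0 = \<alpha>"
  by (simp_all add: psi_def dpsi_def)

lemma dpsi_diff_bound:
  assumes "l \<ge> 0" "y \<ge> 0"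
  shows "\<bar>dpsi \<alpha> \<beta> \<pi> y - dpsi \<alpha> \<beta> \<pi> l\<bar> \<le> 2 * \<beta> * \<bar>y - l\<bar> + levy_modulus \<pi> (y - l)"
proof -
  have "dpsi \<alpha> \<beta> \<pi> y - dpsi \<alpha> \<beta> \<pi> l = 2 * \<beta> * (y - l)
      + ((\<integral>r. r * (1 - exp (- y * r)) \<partial>\<pi>) - (\<integral>r. r * (1 - exp (- l * r)) \<partial>\<pi>))"
    by (simp add: dpsi_def algebra_simps)
  moreover have "\<bar>2 * \<beta> * (y - l)\<bar> = 2 * \<beta> * \<bar>y - l\<bar>" using beta_nonneg by (simp add: abs_mult)
  ultimately show ?thesis
    using dpsi_integral_diff_bound[OF assms] abs_triangle_ineq[of "2 * \<beta> * (y - l)"] by linarith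
qed

lemma continuous_on_dpsi: "continuous_on {0..} (dpsi \<alpha> \<beta> \<pi>)"
  unfolding continuous_on_iff
proof (intro ballI allI impI)
  fix l e :: real assume l: "l \<in> {0..}" and e: "e > 0"
  obtain d1 where d1: "d1 > 0" "\<And>h. \<bar>h\<bar> < d1 \<Longrightarrow> levy_modulus \<pi> h < e / 2"
    using levy_modulus_small[of "e / 2"] e by auto
  define d where "d = min d1 (e / (2 * (2 * \<beta> + 1)))"
  show "\<exists>d>0. \<forall>y\<in>{0..}. dist y l < d \<longrightarrow> dist (dpsi \<alpha> \<beta> \<pi> y) (dpsi \<alpha> \<beta> \<pi> l) < e"
  proof (intro exI[of _ d] conjI ballI impI)
    show "d > 0" using d1 e beta_nonneg by (simp add: d_def)
    fix y :: real assume y: "y \<in> {0..}" and yl: "dist y l < d"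
    have "(2 * \<beta> + 1) * \<bar>y - l\<bar> < e / 2"
      using yl beta_nonneg by (simp add: d_def dist_real_def field_simps)
    moreover have "(2 * \<beta> + 1) * \<bar>y - l\<bar> = 2 * \<beta> * \<bar>y - l\<bar> + \<bar>y - l\<bar>"
      by (simp add: algebra_simps)
    ultimately have "2 * \<beta> * \<bar>y - l\<bar> < e / 2" using abs_ge_zero[of "y - l"] by linarith
    moreover have "levy_modulus \<pi> (y - l) < e / 2" using d1 yl by (simp add: d_def dist_real_def)
    ultimately show "dist (dpsi \<alpha> \<beta> \<pi> y) (dpsi \<alpha> \<beta> \<pi> l) < e"
      using dpsi_diff_bound[of l y] l y by (simp add: dist_real_def)
  qed
qed

lemma dpsi_mult_le:
  assumes l: "l \<ge> 0" and t: "t \<ge> 1"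
  shows "dpsi \<alpha> \<beta> \<pi> (t * l) \<le> t * dpsi \<alpha> \<beta> \<pi> l"
proof -
  have "(\<integral>r. r * (1 - exp (- (t * l) * r)) \<partial>\<pi>) \<le> (\<integral>r. t * (r * (1 - exp (- l * r))) \<partial>\<pi>)"
  proof (rule integral_mono_AE)
    show "integrable \<pi> (\<lambda>r. r * (1 - exp (- (t * l) * r)))"
      using l t by (intro integrable_dpsi_integrand) simp
    show "integrable \<pi> (\<lambda>r. t * (r * (1 - exp (- l * r))))"
      using integrable_dpsi_integrand[OF l] by simp
    show "AE r in \<pi>. r * (1 - exp (- (t * l) * r)) \<le> t * (r * (1 - exp (- l * r)))"
      using AE_levy_pos
    proof eventually_elim
      case (elim r)
      have "1 - exp (- (t * (l * r))) \<le> t * (1 - exp (- (l * r)))"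
        using l elim t by (intro one_minus_exp_minus_mult_le) auto
      then have "r * (1 - exp (- (t * (l * r)))) \<le> r * (t * (1 - exp (- (l * r))))"
        using elim by (intro mult_left_mono) auto
      then show ?case by (simp add: algebra_simps)
    qed
  qed
  also have "\<dots> = t * (\<integral>r. r * (1 - exp (- l * r)) \<partial>\<pi>)" by simp
  moreover have "\<alpha> \<le> t * \<alpha>" using alpha_nonneg t by (simp add: mult_le_cancel_right1)
  ultimately show ?thesis by (simp add: dpsi_def algebra_simps)
qed

lemma dpsi_mono:
  assumes a: "0 \<le> a" and ab: "a \<le> b"
  shows "dpsi \<alpha> \<beta> \<pi> a \<le> dpsi \<alpha> \<beta> \<pi> b"
proof -
  have "(\<integral>r. r * (1 - exp (- a * r)) \<partial>\<pi>) \<le> (\<integral>r. r * (1 - exp (- b * r)) \<partial>\<pi>)"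
  proof (rule integral_mono_AE)
    show "AE r in \<pi>. r * (1 - exp (- a * r)) \<le> r * (1 - exp (- b * r))"
      using AE_levy_pos
    proof eventually_elim
      case (elim r)
      have "a * r \<le> b * r" using ab elim by (intro mult_right_mono) auto
      then show ?case using elim by (intro mult_left_mono) auto
    qed
  qed (use integrable_dpsi_integrand a ab in auto)
  moreover have "2 * \<beta> * a \<le> 2 * \<beta> * b" using beta_nonneg ab by (intro mult_left_mono) auto
  ultimately show ?thesis by (simp add: dpsi_def)
qed

lemma psi_has_real_derivative:
  assumes "x > 0" shows "(psi \<alpha> \<beta> \<pi> has_real_derivative dpsi \<alpha> \<beta> \<pi> x) (at x)"
proof -
  have "(psi \<alpha> \<beta> \<pi> has_real_derivative dpsi \<alpha> \<beta> \<pi> x) (at x within {0<..})"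
    by (rule DERIV_subset[OF psi_has_derivative]) (use assms in auto)
  then show ?thesis using at_within_open[of x "{0<..}"] assms by simp
qed

lemma continuous_on_psi: "continuous_on {0..} (psi \<alpha> \<beta> \<pi>)"
  unfolding continuous_on_eq_continuous_within
  by (auto intro: DERIV_continuous psi_has_derivative)

lemma psi_above_tangent:
  assumes v: "0 \<le> v" and vw: "v \<le> w"
  shows "psi \<alpha> \<beta> \<pi> v + dpsi \<alpha> \<beta> \<pi> v * (w - v) \<le> psi \<alpha> \<beta> \<pi> w"
proof -
  define f where "f x = psi \<alpha> \<beta> \<pi> x - dpsi \<alpha> \<beta> \<pi> v * x" for x
  have "f v \<le> f w"
  proof (rule DERIV_nonneg_imp_increasing_open[OF vw])
    fix x assume "v < x" "x < w"
    then have x: "x > 0" "v \<le> x" using v by auto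
    have "DERIV f x :> dpsi \<alpha> \<beta> \<pi> x - dpsi \<alpha> \<beta> \<pi> v * 1" unfolding f_def
      by (auto intro!: derivative_eq_intros psi_has_real_derivative x)
    moreover have "dpsi \<alpha> \<beta> \<pi> x - dpsi \<alpha> \<beta> \<pi> v * 1 \<ge> 0" using dpsi_mono[OF v x(2)] by simp
    ultimately show "\<exists>y. DERIV f x :> y \<and> 0 \<le> y" by blast
  next
    show "continuous_on {v..w} f" unfolding f_def
      by (intro continuous_intros continuous_on_subset[OF continuous_on_psi]) (use v in auto)
  qed
  then show ?thesis by (simp add: f_def algebra_simps)
qed

lemma psi_nonneg:
  assumes "0 \<le> x" shows "0 \<le> psi \<alpha> \<beta> \<pi> x"
proof -
  have "0 \<le> \<alpha> * x" using alpha_nonneg assms by simp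
  then show ?thesis using psi_above_tangent[OF order_refl assms] psi_0 dpsi_0 by simp
qed

lemma dpsi_const_or_strict_mono:
  assumes a: "0 \<le> a" and ab: "a < b"
  shows "(\<forall>l. dpsi \<alpha> \<beta> \<pi> l = \<alpha>) \<or> dpsi \<alpha> \<beta> \<pi> a < dpsi \<alpha> \<beta> \<pi> b"
proof (rule disjCI)
  assume "\<not> dpsi \<alpha> \<beta> \<pi> a < dpsi \<alpha> \<beta> \<pi> b"
  define h where "h r = r * (1 - exp (- b * r)) - r * (1 - exp (- a * r))" for r
  have h_pos: "h r > 0" if "r > 0" for r
    using ab that by (simp add: h_def algebra_simps)
  have h_AE: "AE r in \<pi>. 0 \<le> h r"
    using AE_levy_pos by eventually_elim (simp add: h_pos less_imp_le)
  have int_h: "integrable \<pi> h"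
    unfolding h_def using integrable_dpsi_integrand a ab by auto
  have "(\<integral>r. h r \<partial>\<pi>) = (\<integral>r. r * (1 - exp (- b * r)) \<partial>\<pi>) - (\<integral>r. r * (1 - exp (- a * r)) \<partial>\<pi>)"
    unfolding h_def using a ab
    by (intro Bochner_Integration.integral_diff integrable_dpsi_integrand) auto
  then have "dpsi \<alpha> \<beta> \<pi> b - dpsi \<alpha> \<beta> \<pi> a = 2 * \<beta> * (b - a) + (\<integral>r. h r \<partial>\<pi>)"
    by (simp add: dpsi_def algebra_simps)
  moreover have "0 \<le> 2 * \<beta> * (b - a)" using beta_nonneg ab by simp
  moreover have "0 \<le> (\<integral>r. h r \<partial>\<pi>)" using h_AE by (rule integral_nonneg_AE)
  ultimately have "2 * \<beta> * (b - a) = 0" and "(\<integral>r. h r \<partial>\<pi>) = 0"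
    using \<open>\<not> dpsi \<alpha> \<beta> \<pi> a < dpsi \<alpha> \<beta> \<pi> b\<close> by linarith+
  then have "\<beta> = 0" using ab by simp
  have "AE r in \<pi>. h r = 0"
    using integral_nonneg_eq_0_iff_AE[OF int_h h_AE] \<open>(\<integral>r. h r \<partial>\<pi>) = 0\<close> by simp
  with AE_levy_pos have "AE r in \<pi>. False" by eventually_elim (use h_pos in force)
  then have "(\<integral>r. r * (1 - exp (- l * r)) \<partial>\<pi>) = 0" for l
    by (intro integral_eq_zero_AE) (auto elim: eventually_mono)
  then show "\<forall>l. dpsi \<alpha> \<beta> \<pi> l = \<alpha>" using \<open>\<beta> = 0\<close> by (simp add: dpsi_def)
qed

end

locale unbounded_branching_mechanism = branching_mechanism +
  assumes psi_deriv_unbounded: "filterlim (psi_deriv \<alpha> \<beta> \<pi>) at_top at_top"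
begin

lemma dpsi_exceeds: obtains x where "0 \<le> x" "y \<le> dpsi \<alpha> \<beta> \<pi> x"
proof -
  obtain N where N: "\<And>x. x \<ge> N \<Longrightarrow> y \<le> psi_deriv \<alpha> \<beta> \<pi> x"
    using psi_deriv_unbounded by (auto simp: filterlim_at_top eventually_at_top_linorder)
  show ?thesis using N[of "max N 0"] psi_deriv_eq_dpsi[of "max N 0"] by (intro that) auto
qed

lemma dpsi_strict_mono:
  assumes "0 \<le> a" "a < b" shows "dpsi \<alpha> \<beta> \<pi> a < dpsi \<alpha> \<beta> \<pi> b"
proof -
  obtain x where "dpsi \<alpha> \<beta> \<pi> x \<noteq> \<alpha>"
    using dpsi_exceeds[of "\<alpha> + 1"] by force
  then show ?thesis using dpsi_const_or_strict_mono[OF assms] by blast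
qed

lemma psi_strict_mono:
  assumes a: "0 \<le> a" and ab: "a < b" shows "psi \<alpha> \<beta> \<pi> a < psi \<alpha> \<beta> \<pi> b"
proof (rule DERIV_pos_imp_increasing_open[OF ab])
  fix x assume "a < x" "x < b"
  then have x: "x > 0" using a by simp
  show "\<exists>y. DERIV (psi \<alpha> \<beta> \<pi>) x :> y \<and> 0 < y"
    using psi_has_real_derivative[OF x] dpsi_strict_mono[OF order_refl x] dpsi_0 alpha_nonneg by auto
qed (use a in \<open>auto intro: continuous_on_subset[OF continuous_on_psi]\<close>)

lemma inj_on_psi: "inj_on (psi \<alpha> \<beta> \<pi>) {0..}"
  by (rule strict_mono_on_imp_inj_on) (auto simp: strict_mono_on_def psi_strict_mono)

lemma inj_on_dpsi: "inj_on (dpsi \<alpha> \<beta> \<pi>) {0..}"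
  by (rule strict_mono_on_imp_inj_on) (auto simp: strict_mono_on_def dpsi_strict_mono)

lemma psi_image: "psi \<alpha> \<beta> \<pi> ` {0..} = {0..}"
proof (intro equalityI subsetI)
  fix z :: real assume "z \<in> {0..}"
  then have z: "0 \<le> z" by simp
  define D where "D = dpsi \<alpha> \<beta> \<pi> 1"
  have D: "D > 0" using dpsi_strict_mono[of 0 1] dpsi_0 alpha_nonneg by (simp add: D_def)
  define w where "w = 1 + (z + \<bar>psi \<alpha> \<beta> \<pi> 1\<bar>) / D"
  have w: "w \<ge> 1" using D z by (simp add: w_def)
  have "psi \<alpha> \<beta> \<pi> 1 + D * (w - 1) \<le> psi \<alpha> \<beta> \<pi> w"
    using psi_above_tangent[of 1 w] w by (simp add: D_def)
  moreover have "D * (w - 1) = z + \<bar>psi \<alpha> \<beta> \<pi> 1\<bar>" using D by (simp add: w_def)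
  ultimately have "z \<le> psi \<alpha> \<beta> \<pi> w" by linarith
  then have "\<exists>x. 0 \<le> x \<and> x \<le> w \<and> psi \<alpha> \<beta> \<pi> x = z"
    by (intro IVT') (use z w psi_0 in \<open>auto intro: continuous_on_subset[OF continuous_on_psi]\<close>)
  then show "z \<in> psi \<alpha> \<beta> \<pi> ` {0..}" by force
qed (auto simp: psi_nonneg)

lemma psi_deriv_image: "psi_deriv \<alpha> \<beta> \<pi> ` {0..} = {\<alpha>..}"
proof -
  have "dpsi \<alpha> \<beta> \<pi> ` {0..} = {\<alpha>..}"
  proof (intro equalityI subsetI)
    fix y :: real assume "y \<in> {\<alpha>..}"
    moreover obtain x where "0 \<le> x" "y \<le> dpsi \<alpha> \<beta> \<pi> x" by (rule dpsi_exceeds)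
    ultimately have "\<exists>l. 0 \<le> l \<and> l \<le> x \<and> dpsi \<alpha> \<beta> \<pi> l = y"
      by (intro IVT') (auto simp: dpsi_0 intro: continuous_on_subset[OF continuous_on_dpsi])
    then show "y \<in> dpsi \<alpha> \<beta> \<pi> ` {0..}" by force
  qed (use dpsi_mono[of 0] dpsi_0 in auto)
  moreover have "psi_deriv \<alpha> \<beta> \<pi> ` {0..} = dpsi \<alpha> \<beta> \<pi> ` {0..}"
    by (rule image_cong) (auto simp: psi_deriv_eq_dpsi)
  ultimately show ?thesis by simp
qed

lemma psi_deriv_inv:
  assumes "\<alpha> \<le> y"
  shows "psi_deriv_inv \<alpha> \<beta> \<pi> y \<ge> 0" "dpsi \<alpha> \<beta> \<pi> (psi_deriv_inv \<alpha> \<beta> \<pi> y) = y"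
proof -
  have y: "y \<in> psi_deriv \<alpha> \<beta> \<pi> ` {0..}" using assms psi_deriv_image by simp
  show nonneg: "psi_deriv_inv \<alpha> \<beta> \<pi> y \<ge> 0"
    using inv_into_into[OF y] by (simp add: psi_deriv_inv_def)
  show "dpsi \<alpha> \<beta> \<pi> (psi_deriv_inv \<alpha> \<beta> \<pi> y) = y"
    using f_inv_into_f[OF y] psi_deriv_eq_dpsi[OF nonneg] by (simp add: psi_deriv_inv_def)
qed

lemma phi_inv_eq:
  assumes "\<alpha> \<le> y" shows "phi_inv \<alpha> \<beta> \<pi> y = psi \<alpha> \<beta> \<pi> (psi_deriv_inv \<alpha> \<beta> \<pi> y)"
proof -
  have phi_psi: "phi \<alpha> \<beta> \<pi> (psi \<alpha> \<beta> \<pi> x) = dpsi \<alpha> \<beta> \<pi> x" if "0 \<le> x" for x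
    using inv_into_f_f[OF inj_on_psi] psi_deriv_eq_dpsi that by (simp add: phi_def)
  define \<mu> where "\<mu> = psi_deriv_inv \<alpha> \<beta> \<pi> y"
  have \<mu>: "0 \<le> \<mu>" "dpsi \<alpha> \<beta> \<pi> \<mu> = y" using psi_deriv_inv[OF assms] by (simp_all add: \<mu>_def)
  then have y: "y \<in> phi \<alpha> \<beta> \<pi> ` {0..}" using phi_psi psi_nonneg by force
  obtain w where w: "0 \<le> w" "phi_inv \<alpha> \<beta> \<pi> y = psi \<alpha> \<beta> \<pi> w"
    using inv_into_into[OF y] psi_image by (auto simp: phi_inv_def)
  have "dpsi \<alpha> \<beta> \<pi> w = dpsi \<alpha> \<beta> \<pi> \<mu>"
    using f_inv_into_f[OF y] phi_psi[OF w(1)] w(2) \<mu>(2) by (simp add: phi_inv_def)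
  then have "w = \<mu>" using inj_on_dpsi w(1) \<mu>(1) by (auto dest: inj_onD)
  then show ?thesis using w(2) by (simp add: \<mu>_def)
qed

lemma psi_deriv_inv_gap_le:
  assumes a: "0 < a" "\<alpha> \<le> a" and ab: "a \<le> b"
  shows "(b - a) * psi_deriv_inv \<alpha> \<beta> \<pi> a \<le> psi \<alpha> \<beta> \<pi> (psi_deriv_inv \<alpha> \<beta> \<pi> b)"
proof -
  define \<nu> where "\<nu> = psi_deriv_inv \<alpha> \<beta> \<pi> a"
  define w where "w = psi_deriv_inv \<alpha> \<beta> \<pi> b"
  have \<nu>: "0 \<le> \<nu>" "dpsi \<alpha> \<beta> \<pi> \<nu> = a" using psi_deriv_inv a by (simp_all add: \<nu>_def)
  have w: "0 \<le> w" "dpsi \<alpha> \<beta> \<pi> w = b" using psi_deriv_inv a ab by (simp_all add: w_def)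
  define t where "t = b / a"
  have t: "1 \<le> t" "(t - 1) * a = b - a" using a ab by (simp_all add: t_def field_simps)
  have "dpsi \<alpha> \<beta> \<pi> (t * \<nu>) \<le> dpsi \<alpha> \<beta> \<pi> w"
    using dpsi_mult_le[OF \<nu>(1) t(1)] \<nu>(2) w(2) a by (simp add: t_def)
  then have "t * \<nu> \<le> w" using dpsi_strict_mono[OF w(1), of "t * \<nu>"] by linarith
  then have "(b - a) * \<nu> \<le> a * (w - \<nu>)"
    using a by (simp flip: t(2) add: algebra_simps mult_left_mono)
  also have "\<dots> \<le> psi \<alpha> \<beta> \<pi> w"
    using psi_above_tangent[OF \<nu>(1), of w] psi_nonneg[OF \<nu>(1)] \<nu>(2) \<open>t * \<nu> \<le> w\<close> t(1)
      mult_right_mono[OF t(1) \<nu>(1)] by simp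
  finally show ?thesis by (simp add: \<nu>_def w_def)
qed

lemma gauge_mult_psi_deriv_inv_le:
  assumes r: "0 < r" and c: "0 < c" "\<alpha> * r^2 \<le> c" and loglog: "1 + c < ln (ln (1 / r))"
  shows "gauge \<alpha> \<beta> \<pi> r * psi_deriv_inv \<alpha> \<beta> \<pi> (c / r^2) \<le> r^2"
proof -
  define L where "L = ln (ln (1 / r))"
  define \<nu> where "\<nu> = psi_deriv_inv \<alpha> \<beta> \<pi> (c / r^2)"
  define P where "P = psi \<alpha> \<beta> \<pi> (psi_deriv_inv \<alpha> \<beta> \<pi> (L^2 / r^2))"
  have L: "1 + c < L" using loglog by (simp add: L_def)
  have "c < L * c" using mult_strict_right_mono[of 1 L c] L c by simp
  also have "\<dots> \<le> L * (L - 1)" using L c by (intro mult_left_mono) auto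
  finally have "L \<le> L^2 - c" by (simp add: power2_eq_square algebra_simps)
  then have "c < L^2" using L c by linarith
  have a: "\<alpha> \<le> c / r^2" using c r by (simp add: field_simps)
  also have "\<dots> \<le> L^2 / r^2" using \<open>c < L^2\<close> by (simp add: divide_right_mono)
  finally have b: "\<alpha> \<le> L^2 / r^2" .
  have gauge: "gauge \<alpha> \<beta> \<pi> r = L / P"
    using phi_inv_eq[OF b] by (simp add: gauge_def L_def P_def power_mult_distrib power_divide)
  have "0 \<le> P" using psi_nonneg[OF psi_deriv_inv(1)[OF b]] by (simp add: P_def)
  have "(L^2 / r^2 - c / r^2) * \<nu> \<le> P"
    using psi_deriv_inv_gap_le[OF _ a] c r \<open>c < L^2\<close> by (simp add: \<nu>_def P_def divide_right_mono)
  then have P: "(L^2 - c) * \<nu> \<le> r^2 * P" using r by (simp add: field_simps)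
  have \<nu>: "0 \<le> \<nu>" using psi_deriv_inv(1)[OF a] by (simp add: \<nu>_def)
  show ?thesis
  proof (cases "P = 0")
    case False
    with \<open>0 \<le> P\<close> have "P > 0" by simp
    have "L * \<nu> \<le> (L^2 - c) * \<nu>" using \<open>L \<le> L^2 - c\<close> \<nu> by (rule mult_right_mono)
    with P have "L * \<nu> \<le> r^2 * P" by linarith
    then have "L * \<nu> / P \<le> r^2" using \<open>P > 0\<close> by (simp add: divide_le_eq)
    then show ?thesis using gauge by (simp add: \<nu>_def)
  qed (simp add: gauge) \<comment> \<open>\<open>P = 0\<close> makes \<open>g(r) = L / 0 = 0\<close>\<close>
qed

end

theorem lemma2p3:
  fixes \<alpha> \<beta> c :: real and \<pi> :: "real measure"
  assumes bm: "branching_mech \<alpha> \<beta> \<pi>"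
    and unbdd: "filterlim (psi_deriv \<alpha> \<beta> \<pi>) at_top at_top"
    and c: "c > 0"
  shows "\<exists>rc. 0 < rc \<and> rc < r0 \<alpha> \<and>
           (\<forall>r. 0 < r \<and> r < rc \<longrightarrow>
              gauge \<alpha> \<beta> \<pi> r * psi_deriv_inv \<alpha> \<beta> \<pi> (c / r^2) \<le> 4 * r^2)"
proof -
  interpret unbounded_branching_mechanism \<alpha> \<beta> \<pi>
    using bm unbdd by unfold_locales
  have "0 < r0 \<alpha>" using alpha_nonneg by (simp add: r0_def)
  define rc where "rc = min (exp (- exp (1 + c))) (min (r0 \<alpha> / 2) (sqrt (c / (\<alpha> + 1))))"
  show ?thesis
  proof (intro exI[of _ rc] conjI allI impI)
    show "0 < rc" "rc < r0 \<alpha>" using \<open>0 < r0 \<alpha>\<close> c alpha_nonneg by (simp_all add: rc_def)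
    fix r :: real assume "0 < r \<and> r < rc"
    then have r: "0 < r" "r < exp (- exp (1 + c))" "r < sqrt (c / (\<alpha> + 1))"
      by (auto simp: rc_def)
    have "r^2 < c / (\<alpha> + 1)"
      using power_strict_mono[OF r(3), of 2] r(1) c alpha_nonneg by simp
    then have "\<alpha> * r^2 + r^2 < c" using alpha_nonneg by (simp add: field_simps)
    then have "\<alpha> * r^2 \<le> c" using zero_le_power2[of r] by linarith
    from gauge_mult_psi_deriv_inv_le[OF r(1) c this ln_ln_inverse_gt[OF r(1,2)]]
    show "gauge \<alpha> \<beta> \<pi> r * psi_deriv_inv \<alpha> \<beta> \<pi> (c / r^2) \<le> 4 * r^2"
      using zero_le_power2[of r] by linarith
  qed
qed

end
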